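(* Let $n\ge3$, $a\in\mathbb{C}^\times$, and let $E_{i,j}$ denote the matrix units in $gl_{2n}(\mathbb{C})$. The assignment $$\psi_a(e_i)=E_{i,i+1}-E_{n+i+1,n+i},\quad \psi_a(f_i)=E_{i+1,i}-E_{n+i,n+i+1}\quad(1\le i\le n-1),$$ $$\psi_a(e_n)=E_{n,n+1}+a^{-1}E_{1,2n},\quad \psi_a(f_n)=E_{n+1,n}+aE_{2n,1}$$ extends to a Lie algebra homomorphism $\psi_a:\mathrm{gim}(M_n)\to sl_{2n}$. Moreover: if $a\neq\pm1$ then the image of $\psi_a$ is $sl_{2n}$; if $a=1$ the image of $\psi_a$ is isomorphic to $sp_{2n}$; if $a=-1$ the image of $\psi_a$ is isomorphic to $so_{2n}$.
   Context: For $n\geq 3$, $M_n=(m_{i,j})$ is the $n\times n$ integer matrix with $m_{i,i}=2$, $m_{i,i+1}=m_{i+1,i}=-1$ ($1\le i\le n-1$), $m_{1,n}=m_{n,1}=1$, all other entries $0$. $\mathrm{gim}(M_n)$ is the complex Lie algebra generated by $e_i,f_i,h_i$ ($1\le i\le n$) with relations: (R1) $[h_i,e_j]=m_{i,j}e_j$, $[h_i,f_j]=-m_{i,j}f_j$, $[e_i,f_i]=h_i$ for all $i,j$; (R2) for $i\ne j$ with $m_{i,j}\le0$: $[e_i,f_j]=0=[f_i,e_j]$, $(\mathrm{ad}\,e_i)^{1-m_{i,j}}e_j=0=(\mathrm{ad}\,f_i)^{1-m_{i,j}}f_j$; (R3) for $i\ne j$ with $m_{i,j}>0$: $[e_i,e_j]=0=[f_i,f_j]$,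 $(\mathrm{ad}\,e_i)^{m_{i,j}+1}f_j=0=(\mathrm{ad}\,f_i)^{m_{i,j}+1}e_j$. *)

theory Defs
  imports Complex_Main
begin

text \<open>Square matrices of size N are represented as functions nat => nat => complex,
  with 1-based indices in {1..N} and all entries outside {1..N} x {1..N} equal to 0.\<close>

type_synonym cmat = "nat \<Rightarrow> nat \<Rightarrow> complex"

definition is_mat :: "nat \<Rightarrow> cmat \<Rightarrow> bool" where
  "is_mat N A \<longleftrightarrow> (\<forall>p q. (p \<notin> {1..N} \<or> q \<notin> {1..N}) \<longrightarrow> A p q = 0)"

definition mzero :: cmat where "mzero = (\<lambda>p q. 0)"
definition madd :: "cmat \<Rightarrow> cmat \<Rightarrow> cmat" where "madd A B = (\<lambda>p q. A p q + B p q)"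
definition msub :: "cmat \<Rightarrow> cmat \<Rightarrow> cmat" where "msub A B = (\<lambda>p q. A p q - B p q)"
definition msmult :: "complex \<Rightarrow> cmat \<Rightarrow> cmat" where "msmult c A = (\<lambda>p q. c * A p q)"
definition mtrans :: "cmat \<Rightarrow> cmat" where "mtrans A = (\<lambda>p q. A q p)"
definition mmul :: "nat \<Rightarrow> cmat \<Rightarrow> cmat \<Rightarrow> cmat" where
  "mmul N A B = (\<lambda>p q. \<Sum>k\<in>{1..N}. A p k * B k q)"
definition mtrace :: "nat \<Rightarrow> cmat \<Rightarrow> complex" where
  "mtrace N A = (\<Sum>k\<in>{1..N}. A k k)"

definition munit :: "nat \<Rightarrow> nat \<Rightarrow> cmat" where
  "munit i j = (\<lambda>p q. if p = i \<and> q = j then 1 else 0)"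

definition bracket :: "nat \<Rightarrow> cmat \<Rightarrow> cmat \<Rightarrow> cmat" where
  "bracket N A B = msub (mmul N A B) (mmul N B A)"

definition gl_set :: "nat \<Rightarrow> cmat set" where "gl_set N = {A. is_mat N A}"
definition sl_set :: "nat \<Rightarrow> cmat set" where "sl_set N = {A. is_mat N A \<and> mtrace N A = 0}"

text \<open>sp_{2n}: X^T J + J X = 0 with J = [[0, I_n], [-I_n, 0]].\<close>
definition Jmat :: "nat \<Rightarrow> cmat" where
  "Jmat n = (\<lambda>p q. if 1 \<le> p \<and> p \<le> n \<and> q = p + n then 1
                    else if n < p \<and> p \<le> 2*n \<and> q + n = p then -1 else 0)"
definition sp_set :: "nat \<Rightarrow> cmat set" where
  "sp_set n = {X. is_mat (2*n) X \<and>
      madd (mmul (2*n) (mtrans X) (Jmat n)) (mmul (2*n) (Jmat n) X) = mzero}"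
definition so_set :: "nat \<Rightarrow> cmat set" where
  "so_set N = {X. is_mat N X \<and> mtrans X = msmult (-1) X}"

inductive_set lie_gen :: "nat \<Rightarrow> cmat set \<Rightarrow> cmat set" for N S where
  gen: "X \<in> S \<Longrightarrow> X \<in> lie_gen N S"
| zero: "mzero \<in> lie_gen N S"
| add: "X \<in> lie_gen N S \<Longrightarrow> Y \<in> lie_gen N S \<Longrightarrow> madd X Y \<in> lie_gen N S"
| smult: "X \<in> lie_gen N S \<Longrightarrow> msmult c X \<in> lie_gen N S"
| brk: "X \<in> lie_gen N S \<Longrightarrow> Y \<in> lie_gen N S \<Longrightarrow> bracket N X Y \<in> lie_gen N S"

definition lie_iso :: "nat \<Rightarrow> cmat set \<Rightarrow> nat \<Rightarrow> cmat set \<Rightarrow> bool" where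
  "lie_iso N A M B \<longleftrightarrow> (\<exists>\<phi>. bij_betw \<phi> A B \<and>
     (\<forall>X\<in>A. \<forall>Y\<in>A. \<phi> (madd X Y) = madd (\<phi> X) (\<phi> Y)) \<and>
     (\<forall>c. \<forall>X\<in>A. \<phi> (msmult c X) = msmult c (\<phi> X)) \<and>
     (\<forall>X\<in>A. \<forall>Y\<in>A. \<phi> (bracket N X Y) = bracket M (\<phi> X) (\<phi> Y)))"

definition Mn :: "nat \<Rightarrow> nat \<Rightarrow> nat \<Rightarrow> int" where
  "Mn n i j = (if i = j then 2
               else if j = i + 1 \<or> i = j + 1 then -1
               else if (i = 1 \<and> j = n) \<or> (i = n \<and> j = 1) then 1 else 0)"

text \<open>By the universal property of a
  Lie algebra given by generators and relations, an assignment on generators extends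
  to a Lie algebra homomorphism gim(M_n) -> gl_N iff these relations hold.\<close>
definition gim_relations :: "nat \<Rightarrow> nat \<Rightarrow> (nat \<Rightarrow> cmat) \<Rightarrow> (nat \<Rightarrow> cmat) \<Rightarrow> (nat \<Rightarrow> cmat) \<Rightarrow> bool" where
  "gim_relations n N E F H \<longleftrightarrow>
    (\<forall>i\<in>{1..n}. \<forall>j\<in>{1..n}.
       bracket N (H i) (E j) = msmult (of_int (Mn n i j)) (E j) \<and>
       bracket N (H i) (F j) = msmult (- of_int (Mn n i j)) (F j)) \<and>
    (\<forall>i\<in>{1..n}. bracket N (E i) (F i) = H i) \<and>
    (\<forall>i\<in>{1..n}. \<forall>j\<in>{1..n}. i \<noteq> j \<and> Mn n i j \<le> 0 \<longrightarrow>
       bracket N (E i) (F j) = mzero \<and> bracket N (F i) (E j) = mzero \<and>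
       (bracket N (E i) ^^ nat (1 - Mn n i j)) (E j) = mzero \<and>
       (bracket N (F i) ^^ nat (1 - Mn n i j)) (F j) = mzero) \<and>
    (\<forall>i\<in>{1..n}. \<forall>j\<in>{1..n}. i \<noteq> j \<and> Mn n i j > 0 \<longrightarrow>
       bracket N (E i) (E j) = mzero \<and> bracket N (F i) (F j) = mzero \<and>
       (bracket N (E i) ^^ nat (Mn n i j + 1)) (F j) = mzero \<and>
       (bracket N (F i) ^^ nat (Mn n i j + 1)) (E j) = mzero)"

definition psiE :: "nat \<Rightarrow> complex \<Rightarrow> nat \<Rightarrow> cmat" where
  "psiE n a i = (if i < n then msub (munit i (i+1)) (munit (n+i+1) (n+i))
                 else madd (munit n (n+1)) (msmult (inverse a) (munit 1 (2*n))))"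
definition psiF :: "nat \<Rightarrow> complex \<Rightarrow> nat \<Rightarrow> cmat" where
  "psiF n a i = (if i < n then msub (munit (i+1) i) (munit (n+i) (n+i+1))
                 else madd (munit (n+1) n) (msmult a (munit (2*n) 1)))"
definition psiH :: "nat \<Rightarrow> complex \<Rightarrow> nat \<Rightarrow> cmat" where
  "psiH n a i = bracket (2*n) (psiE n a i) (psiF n a i)"

definition psi_image :: "nat \<Rightarrow> complex \<Rightarrow> cmat set" where
  "psi_image n a = lie_gen (2*n) (\<Union>i\<in>{1..n}. {psiE n a i, psiF n a i, psiH n a i})"

end

theory Submission
  imports Defs
begin

(* For i < n, psi_a sends e_i and f_i into the block-diagonal copy of gl_n in gl_{2n}, spanned by the
   dmat below, while psi_a(e_n) and psi_a(f_n) lie in the off-diagonal blocks; the defining relations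
   then reduce to identities between matrix units. Bracketing with the dmat spreads psi_a(e_n) and
   psi_a(f_n) to all umat n (1/a) p r and lmat n a r p. If a^2 is not 1, the combinations
   umat(p,r) - (1/a) umat(r,p) and lmat(r,p) - a lmat(p,r) are nonzero multiples of single matrix
   units, which generate sl_{2n}. If a = 1 or a = -1, the dmat, umat and lmat span exactly the Lie
   algebra of the bilinear form with Gram matrix [[0, I], [-a I, 0]]: for a = 1 this is sp_{2n},
   and for a = -1 a change of basis turns it into the skew-symmetric matrices so_{2n}. *)

section \<open>Matrix algebra\<close>

lemmas cmat_defs = madd_def msub_def msmult_def munit_def mzero_def

lemma mmul_munit_munit: "mmul N (munit i j) (munit k l) =
   (if j = k \<and> j \<in> {1..N} then munit i l else mzero)"
  by (auto simp: mmul_def munit_def mzero_def fun_eq_iff if_distrib[where f="\<lambda>x. x * _"] sum.delta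
      cong: if_cong)

lemma mmul_linear:
  "mmul N (madd A B) C = madd (mmul N A C) (mmul N B C)"
  "mmul N C (madd A B) = madd (mmul N C A) (mmul N C B)"
  "mmul N (msub A B) C = msub (mmul N A C) (mmul N B C)"
  "mmul N C (msub A B) = msub (mmul N C A) (mmul N C B)"
  "mmul N (msmult c A) C = msmult c (mmul N A C)"
  "mmul N C (msmult c A) = msmult c (mmul N C A)"
  "mmul N mzero C = mzero"
  "mmul N C mzero = mzero"
  by (simp_all add: mmul_def cmat_defs fun_eq_iff algebra_simps sum.distrib sum_subtractf
      sum_distrib_left)

lemmas mmul_simps = mmul_munit_munit mmul_linear

lemma mmul_assoc: "mmul N (mmul N A B) C = mmul N A (mmul N B C)"
proof -
  have "(\<Sum>k\<in>{1..N}. (\<Sum>m\<in>{1..N}. A p m * B m k) * C k q) =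
        (\<Sum>m\<in>{1..N}. A p m * (\<Sum>k\<in>{1..N}. B m k * C k q))" for p q
    by (simp add: sum_distrib_left sum_distrib_right mult.assoc) (rule sum.swap)
  then show ?thesis by (simp add: mmul_def fun_eq_iff)
qed

lemma msmult_linear:
  "msmult c (madd A B) = madd (msmult c A) (msmult c B)"
  "msmult c (msub A B) = msub (msmult c A) (msmult c B)"
  "msmult c (msmult d A) = msmult (c * d) A"
  by (simp_all add: cmat_defs fun_eq_iff algebra_simps)

lemma msmult_one [simp]: "msmult 1 A = A"
  by (simp add: msmult_def)

lemma madd_mzero [simp]: "madd X mzero = X" "madd mzero X = X"
  by (simp_all add: cmat_defs)

lemma bracket_bilinear:
  "bracket N X (madd A B) = madd (bracket N X A) (bracket N X B)"
  "bracket N X (msub A B) = msub (bracket N X A) (bracket N X B)"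
  "bracket N X (msmult c A) = msmult c (bracket N X A)"
  "bracket N (madd A B) X = madd (bracket N A X) (bracket N B X)"
  "bracket N (msub A B) X = msub (bracket N A X) (bracket N B X)"
  "bracket N (msmult c A) X = msmult c (bracket N A X)"
  by (simp_all add: bracket_def mmul_simps) (simp_all add: fun_eq_iff cmat_defs algebra_simps)

lemma bracket_munit_munit: "i \<noteq> k \<Longrightarrow> j \<in> {1..N} \<Longrightarrow> bracket N (munit i j) (munit j k) = munit i k"
  by (simp add: bracket_def mmul_simps) (auto simp: fun_eq_iff cmat_defs)

lemma bracket_munit_munit_diag: "i \<noteq> j \<Longrightarrow> i \<in> {1..N} \<Longrightarrow> j \<in> {1..N} \<Longrightarrow>
    bracket N (munit i j) (munit j i) = msub (munit i i) (munit j j)"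
  by (simp add: bracket_def mmul_simps)

lemma mtrans_mtrans [simp]: "mtrans (mtrans A) = A"
  by (simp add: mtrans_def)

lemma mtrans_mmul: "mtrans (mmul N A B) = mmul N (mtrans B) (mtrans A)"
  by (simp add: mtrans_def mmul_def fun_eq_iff mult.commute)

lemma mtrans_linear:
  "mtrans (madd A B) = madd (mtrans A) (mtrans B)"
  "mtrans (msub A B) = msub (mtrans A) (mtrans B)"
  "mtrans (msmult c A) = msmult c (mtrans A)"
  "mtrans mzero = mzero"
  by (simp_all add: mtrans_def cmat_defs fun_eq_iff)

lemma madd_eq_mzero_imp: "madd A B = mzero \<Longrightarrow> A = msmult (-1) B"
  by (auto simp: cmat_defs fun_eq_iff eq_neg_iff_add_eq_0 dest!: fun_cong)

lemma is_mat_munit: "i \<in> {1..N} \<Longrightarrow> j \<in> {1..N} \<Longrightarrow> is_mat N (munit i j)"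
  by (auto simp: is_mat_def munit_def)

lemma is_mat_closed:
  "is_mat N mzero"
  "is_mat N A \<Longrightarrow> is_mat N B \<Longrightarrow> is_mat N (madd A B)"
  "is_mat N A \<Longrightarrow> is_mat N B \<Longrightarrow> is_mat N (msub A B)"
  "is_mat N A \<Longrightarrow> is_mat N (msmult c A)"
  "is_mat N A \<Longrightarrow> is_mat N (mtrans A)"
  "is_mat N A \<Longrightarrow> is_mat N B \<Longrightarrow> is_mat N (mmul N A B)"
  "is_mat N A \<Longrightarrow> is_mat N B \<Longrightarrow> is_mat N (bracket N A B)"
  by (auto simp: is_mat_def cmat_defs mtrans_def mmul_def bracket_def)

lemma mtrace_linear:
  "mtrace N mzero = 0"
  "mtrace N (madd A B) = mtrace N A + mtrace N B"
  "mtrace N (msub A B) = mtrace N A - mtrace N B"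
  "mtrace N (msmult c A) = c * mtrace N A"
  by (simp_all add: mtrace_def cmat_defs sum.distrib sum_subtractf sum_distrib_left)

lemma mtrace_munit: "mtrace N (munit i j) = (if i = j \<and> i \<in> {1..N} then 1 else 0)"
  by (cases "i = j") (auto simp: mtrace_def munit_def intro!: sum.neutral)

lemma mtrace_bracket: "mtrace N (bracket N A B) = 0"
proof -
  have "mtrace N (mmul N A B) = mtrace N (mmul N B A)"
    unfolding mtrace_def mmul_def by (subst sum.swap) (simp add: mult.commute)
  then show ?thesis by (simp add: bracket_def mtrace_linear)
qed

lemma munit_expansion: "(\<Sum>p\<in>{1..N}. \<Sum>q\<in>{1..N}. X p q * munit p q i j) =
   (if i \<in> {1..N} \<and> j \<in> {1..N} then X i j else 0)"
proof -
  have "(\<Sum>q\<in>{1..N}. X p q * munit p q i j) = (if p = i then (if j \<in> {1..N} then X p j else 0) else 0)" for p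
  proof -
    have "X p q * munit p q i j = (if q = j then (if p = i then X p q else 0) else 0)" for q
      by (auto simp: munit_def)
    then show ?thesis by (simp add: sum.delta')
  qed
  then show ?thesis by (simp add: sum.delta)
qed

definition diag_mat :: "nat \<Rightarrow> (nat \<Rightarrow> complex) \<Rightarrow> cmat" where
  "diag_mat N d = (\<lambda>p q. if p = q \<and> p \<in> {1..N} then d p else 0)"

lemma bracket_diag_mat_munit: "p \<in> {1..N} \<Longrightarrow> q \<in> {1..N} \<Longrightarrow>
    bracket N (diag_mat N d) (munit p q) = msmult (d p - d q) (munit p q)"
  by (auto simp: bracket_def mmul_def diag_mat_def fun_eq_iff cmat_defs
      if_distrib[where f="\<lambda>x. x * _"] if_distrib[where f="\<lambda>x. _ * x"] sum.delta cong: if_cong)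

section \<open>Generated Lie subalgebras\<close>

lemma lie_gen_msub: "X \<in> lie_gen N S \<Longrightarrow> Y \<in> lie_gen N S \<Longrightarrow> msub X Y \<in> lie_gen N S"
  using lie_gen.add[OF _ lie_gen.smult[of Y N S "-1"], of X] by (simp add: cmat_defs)

lemma lie_gen_sum:
  assumes "finite K" "\<And>k. k \<in> K \<Longrightarrow> F k \<in> lie_gen N S"
  shows "(\<lambda>p q. \<Sum>k\<in>K. F k p q) \<in> lie_gen N S"
  using assms
proof (induction K rule: finite_induct)
  case empty
  then show ?case using lie_gen.zero[of N S] by (simp add: mzero_def)
next
  case (insert x K)
  then have "madd (F x) (\<lambda>p q. \<Sum>k\<in>K. F k p q) \<in> lie_gen N S"
    by (intro lie_gen.add) auto
  then show ?case using insert by (simp add: madd_def)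
qed

lemma lie_gen_madd_cancel:
  "madd X Y \<in> lie_gen N S \<Longrightarrow> X \<in> lie_gen N S \<Longrightarrow> Y \<in> lie_gen N S"
  "madd X Y \<in> lie_gen N S \<Longrightarrow> Y \<in> lie_gen N S \<Longrightarrow> X \<in> lie_gen N S"
  using lie_gen_msub[of "madd X Y" N S X] lie_gen_msub[of "madd X Y" N S Y] by (simp_all add: cmat_defs)

lemma lie_gen_msmult_cancel: "msmult c X \<in> lie_gen N S \<Longrightarrow> c \<noteq> 0 \<Longrightarrow> X \<in> lie_gen N S"
  using lie_gen.smult[of "msmult c X" N S "inverse c"] by (simp add: msmult_def mult.assoc[symmetric])

lemma lie_gen_minimal:
  assumes "S \<subseteq> A" "mzero \<in> A"
    and "\<And>X Y. X \<in> A \<Longrightarrow> Y \<in> A \<Longrightarrow> madd X Y \<in> A"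
    and "\<And>c X. X \<in> A \<Longrightarrow> msmult c X \<in> A"
    and "\<And>X Y. X \<in> A \<Longrightarrow> Y \<in> A \<Longrightarrow> bracket N X Y \<in> A"
  shows "lie_gen N S \<subseteq> A"
proof
  fix X assume "X \<in> lie_gen N S"
  then show "X \<in> A" by induction (use assms in auto)
qed

lemma sl_subset_lie_gen:
  assumes N: "N \<ge> 1"
    and units: "\<And>p q. p \<in> {1..N} \<Longrightarrow> q \<in> {1..N} \<Longrightarrow> p \<noteq> q \<Longrightarrow> munit p q \<in> lie_gen N S"
  shows "sl_set N \<subseteq> lie_gen N S"
proof
  fix X assume X: "X \<in> sl_set N"
  (* X is the sum of the X p q E(p,q) off the diagonal and of the X p p (E(p,p) - E(1,1)),
     since its trace vanishes. *)
  define G where "G p q = (if p = q then msmult (X p p) (msub (munit p p) (munit 1 1))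
                          else msmult (X p q) (munit p q))" for p q
  have G: "G p q \<in> lie_gen N S" if "p \<in> {1..N}" "q \<in> {1..N}" for p q
  proof (cases "p = q")
    case True
    have "msub (munit p p) (munit 1 1) \<in> lie_gen N S"
    proof (cases "p = 1")
      case True
      then show ?thesis using lie_gen.zero[of N S] by (simp add: cmat_defs)
    next
      case False
      then show ?thesis
        using bracket_munit_munit_diag[OF False that(1)] N units[OF that(1), of 1] units[of 1 p] that
          lie_gen.brk[of "munit p 1" N S "munit 1 p"] by auto
    qed
    then show ?thesis using True by (simp add: G_def lie_gen.smult)
  next
    case False
    then show ?thesis using units that by (simp add: G_def lie_gen.smult)
  qed
  have "(\<lambda>i j. \<Sum>p\<in>{1..N}. (\<lambda>i j. \<Sum>q\<in>{1..N}. G p q i j) i j) \<in> lie_gen N S"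
    by (intro lie_gen_sum) (auto intro: G)
  moreover have "(\<lambda>i j. \<Sum>p\<in>{1..N}. (\<lambda>i j. \<Sum>q\<in>{1..N}. G p q i j) i j) = X"
  proof (intro ext)
    fix i j
    have G_entry: "G p q i j = X p q * munit p q i j - (if p = q then X p p * munit 1 1 i j else 0)" for p q
      by (auto simp: G_def cmat_defs algebra_simps)
    have trace: "(\<Sum>p\<in>{1..N}. X p p) = 0" using X by (simp add: sl_set_def mtrace_def)
    have "(\<Sum>p\<in>{1..N}. \<Sum>q\<in>{1..N}. G p q i j) =
        (\<Sum>p\<in>{1..N}. \<Sum>q\<in>{1..N}. X p q * munit p q i j) - (\<Sum>p\<in>{1..N}. X p p) * munit 1 1 i j"
      by (simp add: G_entry sum_subtractf sum.delta sum_distrib_right)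
    also have "\<dots> = X i j"
      unfolding munit_expansion trace using X by (auto simp: sl_set_def is_mat_def)
    finally show "(\<Sum>p\<in>{1..N}. (\<lambda>i j. \<Sum>q\<in>{1..N}. G p q i j) i j) = X i j" by simp
  qed
  ultimately show "X \<in> lie_gen N S" by simp
qed

lemma sl_set_subalgebra:
  "mzero \<in> sl_set N"
  "X \<in> sl_set N \<Longrightarrow> Y \<in> sl_set N \<Longrightarrow> madd X Y \<in> sl_set N"
  "X \<in> sl_set N \<Longrightarrow> msmult c X \<in> sl_set N"
  "X \<in> sl_set N \<Longrightarrow> Y \<in> sl_set N \<Longrightarrow> bracket N X Y \<in> sl_set N"
  by (simp_all add: sl_set_def is_mat_closed mtrace_linear mtrace_bracket)

section \<open>Block structure of gl(2n)\<close>

lemma double_range_cases: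
  assumes "(i::nat) \<in> {1..2*n}"
  obtains "i \<in> {1..n}" | s where "s \<in> {1..n}" "i = n + s"
proof (cases "i \<le> n")
  case False
  then show ?thesis using assms that(2)[of "i - n"] by auto
qed (use assms that(1) in auto)

lemma ball_double_range: "(\<forall>i::nat\<in>{1..2*n}. P i) \<longleftrightarrow> (\<forall>s\<in>{1..n}. P s \<and> P (n + s))"
proof
  assume "\<forall>s\<in>{1..n}. P s \<and> P (n + s)"
  moreover have "i \<in> {1..2*n} \<Longrightarrow> i \<in> {1..n} \<or> (i - n \<in> {1..n} \<and> i = n + (i - n))" for i
    by auto
  ultimately show "\<forall>i\<in>{1..2*n}. P i" by metis
qed auto

lemma cmat_eq_blockwise:
  assumes "is_mat (2*n) A" "is_mat (2*n) B"
    and "\<And>s r. s \<in> {1..n} \<Longrightarrow> r \<in> {1..n} \<Longrightarrow> A s r = B s r"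
    and "\<And>s r. s \<in> {1..n} \<Longrightarrow> r \<in> {1..n} \<Longrightarrow> A s (n+r) = B s (n+r)"
    and "\<And>s r. s \<in> {1..n} \<Longrightarrow> r \<in> {1..n} \<Longrightarrow> A (n+s) r = B (n+s) r"
    and "\<And>s r. s \<in> {1..n} \<Longrightarrow> r \<in> {1..n} \<Longrightarrow> A (n+s) (n+r) = B (n+s) (n+r)"
  shows "A = B"
proof (intro ext)
  fix i j
  show "A i j = B i j"
  proof (cases "i \<in> {1..2*n} \<and> j \<in> {1..2*n}")
    case True
    have "\<forall>i\<in>{1..2*n}. \<forall>j\<in>{1..2*n}. A i j = B i j"
      unfolding ball_double_range using assms(3-6) by blast
    then show ?thesis using True by blast
  qed (use assms(1,2) in \<open>auto simp: is_mat_def\<close>)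
qed

definition dmat :: "nat \<Rightarrow> nat \<Rightarrow> nat \<Rightarrow> cmat" where
  "dmat n p q = msub (munit p q) (munit (n+q) (n+p))"
definition umat :: "nat \<Rightarrow> complex \<Rightarrow> nat \<Rightarrow> nat \<Rightarrow> cmat" where
  "umat n b p r = madd (munit p (n+r)) (msmult b (munit r (n+p)))"
definition lmat :: "nat \<Rightarrow> complex \<Rightarrow> nat \<Rightarrow> nat \<Rightarrow> cmat" where
  "lmat n b r p = madd (munit (n+r) p) (msmult b (munit (n+p) r))"

lemma is_mat_dmat_umat_lmat:
  assumes "p \<in> {1..n}" "q \<in> {1..n}"
  shows "is_mat (2*n) (dmat n p q)" "is_mat (2*n) (umat n b p q)" "is_mat (2*n) (lmat n b p q)"
  using assms by (auto simp: dmat_def umat_def lmat_def intro!: is_mat_closed is_mat_munit)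

lemma munit_self: "munit i j i j = 1"
  by (simp add: munit_def)

lemma munit_block_entries:
  assumes "s \<in> {1..n}" "r \<in> {1..n}" "x \<in> {1..n}" "y \<in> {1..n}"
  shows "munit x y s r = (if s = x \<and> r = y then 1 else 0)"
    "munit x y (n+s) r = 0" "munit x y s (n+r) = 0" "munit x y (n+s) (n+r) = 0"
    "munit (n+x) y s r = 0" "munit (n+x) y (n+s) r = (if s = x \<and> r = y then 1 else 0)"
    "munit (n+x) y s (n+r) = 0" "munit (n+x) y (n+s) (n+r) = 0"
    "munit x (n+y) s r = 0" "munit x (n+y) (n+s) r = 0"
    "munit x (n+y) s (n+r) = (if s = x \<and> r = y then 1 else 0)" "munit x (n+y) (n+s) (n+r) = 0"
    "munit (n+x) (n+y) s r = 0" "munit (n+x) (n+y) (n+s) r = 0"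
    "munit (n+x) (n+y) s (n+r) = 0" "munit (n+x) (n+y) (n+s) (n+r) = (if s = x \<and> r = y then 1 else 0)"
  using assms by (auto simp: munit_def)

lemma bracket_dmat_dmat:
  assumes "p \<noteq> r" "p \<in> {1..n}" "q \<in> {1..n}" "r \<in> {1..n}"
  shows "bracket (2*n) (dmat n p q) (dmat n q r) = dmat n p r"
  using assms by (simp add: bracket_def dmat_def mmul_simps) (auto simp: fun_eq_iff cmat_defs)

lemma bracket_dmat_dmat_diag:
  assumes "p \<noteq> q" "p \<in> {1..n}" "q \<in> {1..n}"
  shows "bracket (2*n) (dmat n p q) (dmat n q p) = msub (dmat n p p) (dmat n q q)"
  using assms by (simp add: bracket_def dmat_def mmul_simps) (auto simp: fun_eq_iff cmat_defs)

lemma bracket_dmat_umat: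
  assumes "x \<noteq> y" "x \<in> {1..n}" "y \<in> {1..n}" "p \<in> {1..n}" "r \<in> {1..n}"
  shows "bracket (2*n) (dmat n x y) (umat n b p r) =
     madd (if y = p then umat n b x r else mzero) (if y = r then umat n b p x else mzero)"
  using assms by (simp add: bracket_def dmat_def umat_def mmul_simps) (auto simp: fun_eq_iff cmat_defs)

lemma bracket_dmat_lmat:
  assumes "x \<noteq> y" "x \<in> {1..n}" "y \<in> {1..n}" "p \<in> {1..n}" "r \<in> {1..n}"
  shows "bracket (2*n) (dmat n x y) (lmat n b r p) =
     msmult (-1) (madd (if x = r then lmat n b y p else mzero) (if x = p then lmat n b r y else mzero))"
  using assms by (simp add: bracket_def dmat_def lmat_def mmul_simps) (auto simp: fun_eq_iff cmat_defs)

section \<open>Lie algebras of the forms [[0, I], [c I, 0]]\<close>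

(* form_mat n c is the Gram matrix [[0, I], [c I, 0]]: c = -1 gives sp(2n) and c = 1 an orthogonal
   algebra. Its column j and row i each have a single nonzero entry, in row (resp. column)
   bswap n j, of value form_col n c j (resp. form_row n c i). *)

definition form_mat :: "nat \<Rightarrow> complex \<Rightarrow> cmat" where
  "form_mat n c = (\<lambda>p q. if 1 \<le> p \<and> p \<le> n \<and> q = p + n then 1
                    else if n < p \<and> p \<le> 2*n \<and> q + n = p then c else 0)"

definition form_defect :: "nat \<Rightarrow> complex \<Rightarrow> cmat \<Rightarrow> cmat" where
  "form_defect n c X = madd (mmul (2*n) (mtrans X) (form_mat n c)) (mmul (2*n) (form_mat n c) X)"

definition form_alg :: "nat \<Rightarrow> complex \<Rightarrow> cmat set" where
  "form_alg n c = {X. is_mat (2*n) X \<and> form_defect n c X = mzero}"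

definition bswap :: "nat \<Rightarrow> nat \<Rightarrow> nat" where "bswap n j = (if j \<le> n then j + n else j - n)"
definition form_col :: "nat \<Rightarrow> complex \<Rightarrow> nat \<Rightarrow> complex" where
  "form_col n c j = (if j \<le> n then c else 1)"
definition form_row :: "nat \<Rightarrow> complex \<Rightarrow> nat \<Rightarrow> complex" where
  "form_row n c j = (if j \<le> n then 1 else c)"

lemma sp_set_eq_form_alg: "sp_set n = form_alg n (-1)"
  by (simp add: sp_set_def form_alg_def form_defect_def Jmat_def form_mat_def)

lemma bswap_in_range: "j \<in> {1..2*n} \<Longrightarrow> bswap n j \<in> {1..2*n}"
  by (auto simp: bswap_def)

lemma bswap_bswap: "j \<in> {1..2*n} \<Longrightarrow> bswap n (bswap n j) = j"
  by (auto simp: bswap_def)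

lemma bswap_blocks: "j \<le> n \<Longrightarrow> bswap n j = n + j" "1 \<le> s \<Longrightarrow> bswap n (n + s) = s"
  by (auto simp: bswap_def)

lemma form_col_row_blocks:
  "j \<le> n \<Longrightarrow> form_col n c j = c" "j \<le> n \<Longrightarrow> form_row n c j = 1"
  "1 \<le> s \<Longrightarrow> form_col n c (n + s) = 1" "1 \<le> s \<Longrightarrow> form_row n c (n + s) = c"
  by (auto simp: form_col_def form_row_def)

lemma form_row_bswap: "i \<in> {1..2*n} \<Longrightarrow> form_row n c (bswap n i) = form_col n c i"
  by (auto simp: form_row_def form_col_def bswap_def)

lemma form_condition_entry:
  assumes "i \<in> {1..2*n}" "j \<in> {1..2*n}"
  shows "form_defect n c X i j =
     X (bswap n j) i * form_col n c j + form_row n c i * X (bswap n i) j"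
proof -
  have col: "form_mat n c k j = (if k = bswap n j then form_col n c j else 0)" for k
    using assms(2) by (auto simp: form_mat_def bswap_def form_col_def)
  have row: "form_mat n c i k = (if k = bswap n i then form_row n c i else 0)" for k
    using assms(1) by (auto simp: form_mat_def bswap_def form_row_def)
  show ?thesis
    using bswap_in_range[OF assms(1)] bswap_in_range[OF assms(2)]
    by (simp add: form_defect_def madd_def mmul_def mtrans_def col row if_distrib[where f="\<lambda>x. _ * x"]
        if_distrib[where f="\<lambda>x. x * _"] sum.delta cong: if_cong)
qed

lemma form_alg_iff:
  assumes "is_mat (2*n) X"
  shows "X \<in> form_alg n c \<longleftrightarrow> (\<forall>i\<in>{1..2*n}. \<forall>j\<in>{1..2*n}.
            X (bswap n j) i * form_col n c j + form_row n c i * X (bswap n i) j = 0)"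
proof -
  have outside: "form_defect n c X i j = 0" if "\<not> (i \<in> {1..2*n} \<and> j \<in> {1..2*n})" for i j
    using assms that by (auto simp: form_defect_def madd_def mmul_def mtrans_def is_mat_def form_mat_def intro!: sum.neutral)
  show ?thesis
    using assms outside form_condition_entry[of _ n _ c X]
    by (auto simp: form_alg_def mzero_def fun_eq_iff) metis
qed

lemma form_alg_iff_blocks:
  assumes "is_mat (2*n) X"
  shows "X \<in> form_alg n c \<longleftrightarrow> (\<forall>s\<in>{1..n}. \<forall>r\<in>{1..n}.
     X (n+r) s * c + X (n+s) r = 0 \<and> X r s + X (n+s) (n+r) = 0 \<and>
     X (n+r) (n+s) * c + c * X s r = 0 \<and> X r (n+s) + c * X s (n+r) = 0)"
  unfolding form_alg_iff[OF assms] ball_double_range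
  by (auto simp: bswap_blocks form_col_row_blocks)

lemma form_defect_linear:
  "form_defect n c mzero = mzero"
  "form_defect n c (madd X Y) = madd (form_defect n c X) (form_defect n c Y)"
  "form_defect n c (msmult d X) = msmult d (form_defect n c X)"
  by (simp_all add: form_defect_def mtrans_linear mmul_linear) (simp_all add: cmat_defs fun_eq_iff algebra_simps)

lemma form_alg_linear_closed:
  "mzero \<in> form_alg n c"
  "X \<in> form_alg n c \<Longrightarrow> Y \<in> form_alg n c \<Longrightarrow> madd X Y \<in> form_alg n c"
  "X \<in> form_alg n c \<Longrightarrow> msmult d X \<in> form_alg n c"
  by (auto simp: form_alg_def form_defect_linear is_mat_closed) (simp_all add: cmat_defs)

lemma form_alg_bracket:
  assumes X: "X \<in> form_alg n c" and Y: "Y \<in> form_alg n c"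
  shows "bracket (2*n) X Y \<in> form_alg n c"
proof -
  let ?N = "2*n" and ?J = "form_mat n c"
  have XJ: "mmul ?N (mtrans X) ?J = msmult (-1) (mmul ?N ?J X)"
    using X by (simp add: form_alg_def form_defect_def madd_eq_mzero_imp)
  have YJ: "mmul ?N (mtrans Y) ?J = msmult (-1) (mmul ?N ?J Y)"
    using Y by (simp add: form_alg_def form_defect_def madd_eq_mzero_imp)
  have swap: "mmul ?N (mmul ?N (mtrans B) (mtrans A)) ?J = mmul ?N (mmul ?N ?J B) A"
    if "mmul ?N (mtrans A) ?J = msmult (-1) (mmul ?N ?J A)"
       "mmul ?N (mtrans B) ?J = msmult (-1) (mmul ?N ?J B)" for A B
  proof -
    have "mmul ?N (mmul ?N (mtrans B) (mtrans A)) ?J = msmult (-1) (mmul ?N (mtrans B) (mmul ?N ?J A))"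
      by (simp add: mmul_assoc that(1) mmul_linear)
    also have "\<dots> = mmul ?N (mmul ?N ?J B) A"
      by (simp add: mmul_assoc[symmetric] that(2) mmul_linear msmult_linear msmult_one)
    finally show ?thesis .
  qed
  have "form_defect n c (bracket ?N X Y) =
     madd (msub (mmul ?N (mmul ?N ?J Y) X) (mmul ?N (mmul ?N ?J X) Y))
          (msub (mmul ?N ?J (mmul ?N X Y)) (mmul ?N ?J (mmul ?N Y X)))"
    by (simp add: form_defect_def bracket_def mtrans_linear mtrans_mmul mmul_linear swap[OF XJ YJ] swap[OF YJ XJ])
  also have "\<dots> = mzero" by (simp add: mmul_assoc cmat_defs fun_eq_iff)
  finally show ?thesis using X Y by (simp add: form_alg_def is_mat_closed)
qed

lemma dmat_umat_lmat_entries: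
  assumes "p \<in> {1..n}" "q \<in> {1..n}" "s \<in> {1..n}" "r \<in> {1..n}"
  shows "dmat n p q s r = (if s = p \<and> r = q then 1 else 0)" "dmat n p q (n+s) r = 0"
    "dmat n p q s (n+r) = 0" "dmat n p q (n+s) (n+r) = (if s = q \<and> r = p then -1 else 0)"
    "umat n b p q s r = 0" "umat n b p q (n+s) r = 0"
    "umat n b p q s (n+r) = (if s = p \<and> r = q then 1 else 0) + (if s = q \<and> r = p then b else 0)"
    "umat n b p q (n+s) (n+r) = 0"
    "lmat n b p q s r = 0" "lmat n b p q s (n+r) = 0"
    "lmat n b p q (n+s) r = (if s = p \<and> r = q then 1 else 0) + (if s = q \<and> r = p then b else 0)"
    "lmat n b p q (n+s) (n+r) = 0"
  using assms by (auto simp: dmat_def umat_def lmat_def cmat_defs)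
lemma umat_in_form_alg:
  assumes "p \<in> {1..n}" "q \<in> {1..n}" "c * c = 1"
  shows "umat n (-c) p q \<in> form_alg n c"
  unfolding form_alg_iff_blocks[OF is_mat_dmat_umat_lmat(2)[OF assms(1,2)]]
proof (intro ballI)
  fix s r assume sr: "s \<in> {1..n}" "r \<in> {1..n}"
  define x y where "x = (if r = p \<and> s = q then 1 else 0 :: complex)"
    and "y = (if r = q \<and> s = p then 1 else 0 :: complex)"
  have "umat n (-c) p q r (n + s) = x - c * y"
    using assms(1,2) sr by (simp add: dmat_umat_lmat_entries x_def y_def)
  moreover have "umat n (-c) p q s (n + r) = y - c * x"
    using assms(1,2) sr by (simp add: dmat_umat_lmat_entries x_def y_def conj_commute)
  moreover have "(x - c * y) + c * (y - c * x) = 0"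
    using assms(3) by (simp add: right_diff_distrib mult.assoc[symmetric])
  ultimately show "umat n (-c) p q (n + r) s * c + umat n (-c) p q (n + s) r = 0 \<and>
      umat n (-c) p q r s + umat n (-c) p q (n + s) (n + r) = 0 \<and>
      umat n (-c) p q (n + r) (n + s) * c + c * umat n (-c) p q s r = 0 \<and>
      umat n (-c) p q r (n + s) + c * umat n (-c) p q s (n + r) = 0"
    using assms(1,2) sr by (simp add: dmat_umat_lmat_entries)
qed

lemma lmat_in_form_alg:
  assumes "p \<in> {1..n}" "q \<in> {1..n}" "c * c = 1"
  shows "lmat n (-c) p q \<in> form_alg n c"
  unfolding form_alg_iff_blocks[OF is_mat_dmat_umat_lmat(3)[OF assms(1,2)]]
proof (intro ballI)
  fix s r assume sr: "s \<in> {1..n}" "r \<in> {1..n}"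
  define x y where "x = (if r = p \<and> s = q then 1 else 0 :: complex)"
    and "y = (if r = q \<and> s = p then 1 else 0 :: complex)"
  have "lmat n (-c) p q (n + r) s = x - c * y"
    using assms(1,2) sr by (simp add: dmat_umat_lmat_entries x_def y_def)
  moreover have "lmat n (-c) p q (n + s) r = y - c * x"
    using assms(1,2) sr by (simp add: dmat_umat_lmat_entries x_def y_def conj_commute)
  moreover have "(x - c * y) * c + (y - c * x) = 0"
    using assms(3) by (simp add: algebra_simps)
  ultimately show "lmat n (-c) p q (n + r) s * c + lmat n (-c) p q (n + s) r = 0 \<and>
      lmat n (-c) p q r s + lmat n (-c) p q (n + s) (n + r) = 0 \<and>
      lmat n (-c) p q (n + r) (n + s) * c + c * lmat n (-c) p q s r = 0 \<and>
      lmat n (-c) p q r (n + s) + c * lmat n (-c) p q s (n + r) = 0"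
    using assms(1,2) sr by (simp add: dmat_umat_lmat_entries)
qed

lemma dmat_in_form_alg:
  assumes "p \<in> {1..n}" "q \<in> {1..n}"
  shows "dmat n p q \<in> form_alg n c"
  unfolding form_alg_iff_blocks[OF is_mat_dmat_umat_lmat(1)[OF assms]]
  using assms by (intro ballI conjI) (simp_all add: dmat_umat_lmat_entries)

(* The projection of E(p,q) onto form_alg n c along its complement, when c * c = 1. *)
definition form_proj :: "nat \<Rightarrow> complex \<Rightarrow> nat \<Rightarrow> nat \<Rightarrow> cmat" where
  "form_proj n c p q = (\<lambda>i j. if i \<in> {1..2*n} \<and> j \<in> {1..2*n} then
      (munit p q i j - form_col n c i * form_col n c j * munit p q (bswap n j) (bswap n i)) / 2 else 0)"

lemma form_proj_block_entries:
  assumes "s \<in> {1..n}" "r \<in> {1..n}" "c * c = 1"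
  shows "form_proj n c p q s r = (munit p q s r - munit p q (n+r) (n+s)) / 2"
    "form_proj n c p q s (n+r) = (munit p q s (n+r) - c * munit p q r (n+s)) / 2"
    "form_proj n c p q (n+s) r = (munit p q (n+s) r - c * munit p q (n+r) s) / 2"
    "form_proj n c p q (n+s) (n+r) = (munit p q (n+s) (n+r) - munit p q r s) / 2"
  using assms by (auto simp: form_proj_def bswap_blocks form_col_row_blocks)

lemma is_mat_form_proj: "is_mat (2*n) (form_proj n c p q)"
  by (simp add: form_proj_def is_mat_def)

lemma form_proj_eq:
  assumes "p \<in> {1..n}" "q \<in> {1..n}" "c * c = 1"
  shows "form_proj n c p q = msmult (1/2) (dmat n p q)"
    and "form_proj n c (n+p) (n+q) = msmult (-1/2) (dmat n q p)"
    and "form_proj n c p (n+q) = msmult (1/2) (umat n (-c) p q)"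
    and "form_proj n c (n+p) q = msmult (1/2) (lmat n (-c) p q)"
proof -
  note mats = is_mat_dmat_umat_lmat[OF assms(1,2)] is_mat_dmat_umat_lmat[OF assms(2,1)]
  note eval = form_proj_block_entries[OF _ _ assms(3)] munit_block_entries
    dmat_def umat_def lmat_def cmat_defs(1,2,3) munit_self
  show "form_proj n c p q = msmult (1/2) (dmat n p q)"
    by (rule cmat_eq_blockwise[OF is_mat_form_proj is_mat_closed(4)[OF mats(1)]])
      (use assms in \<open>auto simp: eval\<close>)
  show "form_proj n c (n+p) (n+q) = msmult (-1/2) (dmat n q p)"
    by (rule cmat_eq_blockwise[OF is_mat_form_proj is_mat_closed(4)[OF mats(4)]])
      (use assms in \<open>auto simp: eval\<close>)
  show "form_proj n c p (n+q) = msmult (1/2) (umat n (-c) p q)"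
    by (rule cmat_eq_blockwise[OF is_mat_form_proj is_mat_closed(4)[OF mats(2)]])
      (use assms in \<open>auto simp: eval\<close>)
  show "form_proj n c (n+p) q = msmult (1/2) (lmat n (-c) p q)"
    by (rule cmat_eq_blockwise[OF is_mat_form_proj is_mat_closed(4)[OF mats(3)]])
      (use assms in \<open>auto simp: eval\<close>)
qed

lemma form_alg_entry_symmetry:
  assumes "X \<in> form_alg n c" "c * c = 1" "i \<in> {1..2*n}" "j \<in> {1..2*n}"
  shows "X (bswap n j) (bswap n i) = - (form_col n c i * form_col n c j * X i j)"
proof -
  have sq: "form_col n c k * form_col n c k = 1" for k
    using assms(2) by (simp add: form_col_def)
  have "X (bswap n j) (bswap n i) * form_col n c j + form_row n c (bswap n i) * X (bswap n (bswap n i)) j = 0"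
    using assms(1) bswap_in_range[OF assms(3)] assms(4)
    unfolding form_alg_iff[OF conjunct1[OF assms(1)[unfolded form_alg_def mem_Collect_eq]]] by blast
  then have "X (bswap n j) (bswap n i) * form_col n c j = - (form_col n c i * X i j)"
    using assms(3) by (simp add: bswap_bswap form_row_bswap eq_neg_iff_add_eq_0)
  then have "X (bswap n j) (bswap n i) * (form_col n c j * form_col n c j) =
      - (form_col n c i * X i j) * form_col n c j"
    by (simp add: mult.assoc[symmetric])
  then show ?thesis by (simp add: sq algebra_simps)
qed

lemma form_proj_expansion:
  assumes X: "X \<in> form_alg n c" and c: "c * c = 1"
  shows "(\<lambda>i j. \<Sum>p\<in>{1..2*n}. \<Sum>q\<in>{1..2*n}. msmult (X p q) (form_proj n c p q) i j) = X"
proof (intro ext)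
  fix i j
  show "(\<Sum>p\<in>{1..2*n}. \<Sum>q\<in>{1..2*n}. msmult (X p q) (form_proj n c p q) i j) = X i j"
  proof (cases "i \<in> {1..2*n} \<and> j \<in> {1..2*n}")
    case False
    then show ?thesis using X by (auto simp: msmult_def form_proj_def form_alg_def is_mat_def)
  next
    case True
    let ?w = "form_col n c i * form_col n c j"
    have "(\<Sum>p\<in>{1..2*n}. \<Sum>q\<in>{1..2*n}. msmult (X p q) (form_proj n c p q) i j) =
        ((\<Sum>p\<in>{1..2*n}. \<Sum>q\<in>{1..2*n}. X p q * munit p q i j)
          - ?w * (\<Sum>p\<in>{1..2*n}. \<Sum>q\<in>{1..2*n}. X p q * munit p q (bswap n j) (bswap n i))) / 2"
      using True
      by (simp add: msmult_def form_proj_def algebra_simps diff_divide_distrib sum_divide_distrib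
          sum_subtractf sum_distrib_left)
    also have "\<dots> = (X i j - ?w * X (bswap n j) (bswap n i)) / 2"
      unfolding munit_expansion using True bswap_in_range[of j n] bswap_in_range[of i n] by simp
    also have "\<dots> = X i j"
      using form_alg_entry_symmetry[OF X c] True c by (simp add: form_col_def algebra_simps)
    finally show ?thesis .
  qed
qed

lemma form_alg_subset_lie_gen:
  assumes c: "c * c = 1"
    and gens: "\<And>p q. p \<in> {1..n} \<Longrightarrow> q \<in> {1..n} \<Longrightarrow>
      dmat n p q \<in> lie_gen (2*n) S \<and> umat n (-c) p q \<in> lie_gen (2*n) S \<and> lmat n (-c) p q \<in> lie_gen (2*n) S"
  shows "form_alg n c \<subseteq> lie_gen (2*n) S"
proof
  fix X assume X: "X \<in> form_alg n c"
  have proj: "form_proj n c p q \<in> lie_gen (2*n) S" if "p \<in> {1..2*n}" "q \<in> {1..2*n}" for p q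
  proof (cases rule: double_range_cases[OF that(1)])
    case 1
    then show ?thesis
      by (cases rule: double_range_cases[OF that(2)]) (auto simp: form_proj_eq c gens lie_gen.smult)
  next
    case (2 s)
    then show ?thesis
      by (cases rule: double_range_cases[OF that(2)]) (auto simp: form_proj_eq c gens lie_gen.smult)
  qed
  have "(\<lambda>i j. \<Sum>p\<in>{1..2*n}. (\<lambda>i j. \<Sum>q\<in>{1..2*n}. msmult (X p q) (form_proj n c p q) i j) i j)
      \<in> lie_gen (2*n) S"
    by (intro lie_gen_sum lie_gen.smult proj) auto
  then show "X \<in> lie_gen (2*n) S" by (simp only: form_proj_expansion[OF X c])
qed

section \<open>The orthogonal case as skew-symmetric matrices\<close>

definition scalar_blocks :: "nat \<Rightarrow> complex \<Rightarrow> complex \<Rightarrow> complex \<Rightarrow> complex \<Rightarrow> cmat" where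
  "scalar_blocks n \<alpha> \<beta> \<gamma> \<delta> = (\<lambda>p q.
     if 1 \<le> p \<and> p \<le> n then (if q = p then \<alpha> else if q = p + n then \<beta> else 0)
     else if n < p \<and> p \<le> 2*n then (if q + n = p then \<gamma> else if q = p then \<delta> else 0)
     else 0)"

lemma is_mat_scalar_blocks: "is_mat (2*n) (scalar_blocks n \<alpha> \<beta> \<gamma> \<delta>)"
  by (auto simp: is_mat_def scalar_blocks_def)

lemma scalar_blocks_entries:
  assumes "s \<in> {1..n}" "r \<in> {1..n}"
  shows "scalar_blocks n \<alpha> \<beta> \<gamma> \<delta> s r = (if r = s then \<alpha> else 0)"
    "scalar_blocks n \<alpha> \<beta> \<gamma> \<delta> s (n+r) = (if r = s then \<beta> else 0)"
    "scalar_blocks n \<alpha> \<beta> \<gamma> \<delta> (n+s) r = (if r = s then \<gamma> else 0)"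
    "scalar_blocks n \<alpha> \<beta> \<gamma> \<delta> (n+s) (n+r) = (if r = s then \<delta> else 0)"
  using assms by (auto simp: scalar_blocks_def)

lemma mmul_scalar_blocks_rows:
  assumes "s \<in> {1..n}"
  shows "mmul (2*n) (scalar_blocks n \<alpha> \<beta> \<gamma> \<delta>) B s q = \<alpha> * B s q + \<beta> * B (n+s) q"
    "mmul (2*n) (scalar_blocks n \<alpha> \<beta> \<gamma> \<delta>) B (n+s) q = \<gamma> * B s q + \<delta> * B (n+s) q"
proof -
  have row: "(\<Sum>k\<in>{1..2*n}. ((if k = s then x else 0) + (if k = n + s then y else 0)) * B k q) =
      x * B s q + y * B (n+s) q" for x y
    using assms by (simp add: distrib_right sum.distrib if_distrib[where f="\<lambda>z. z * _"] sum.delta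
        cong: if_cong)
  have "scalar_blocks n \<alpha> \<beta> \<gamma> \<delta> s k = (if k = s then \<alpha> else 0) + (if k = n + s then \<beta> else 0)"
      "scalar_blocks n \<alpha> \<beta> \<gamma> \<delta> (n+s) k = (if k = s then \<gamma> else 0) + (if k = n + s then \<delta> else 0)" for k
    using assms by (auto simp: scalar_blocks_def)
  then show "mmul (2*n) (scalar_blocks n \<alpha> \<beta> \<gamma> \<delta>) B s q = \<alpha> * B s q + \<beta> * B (n+s) q"
    "mmul (2*n) (scalar_blocks n \<alpha> \<beta> \<gamma> \<delta>) B (n+s) q = \<gamma> * B s q + \<delta> * B (n+s) q"
    by (simp_all only: mmul_def row)
qed

lemma mmul_scalar_blocks:
  "mmul (2*n) (scalar_blocks n \<alpha> \<beta> \<gamma> \<delta>) (scalar_blocks n \<alpha>' \<beta>' \<gamma>' \<delta>') =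
   scalar_blocks n (\<alpha>*\<alpha>' + \<beta>*\<gamma>') (\<alpha>*\<beta>' + \<beta>*\<delta>') (\<gamma>*\<alpha>' + \<delta>*\<gamma>') (\<gamma>*\<beta>' + \<delta>*\<delta>')"
  by (rule cmat_eq_blockwise[OF is_mat_closed(6) is_mat_scalar_blocks])
    (simp_all add: is_mat_scalar_blocks mmul_scalar_blocks_rows scalar_blocks_entries)

lemma mtrans_scalar_blocks: "mtrans (scalar_blocks n \<alpha> \<beta> \<gamma> \<delta>) = scalar_blocks n \<alpha> \<gamma> \<beta> \<delta>"
  by (rule cmat_eq_blockwise[OF is_mat_closed(5) is_mat_scalar_blocks])
    (simp_all add: is_mat_scalar_blocks mtrans_def scalar_blocks_entries)

lemma msmult_scalar_blocks:
  "msmult c (scalar_blocks n \<alpha> \<beta> \<gamma> \<delta>) = scalar_blocks n (c*\<alpha>) (c*\<beta>) (c*\<gamma>) (c*\<delta>)"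
  by (auto simp: msmult_def scalar_blocks_def fun_eq_iff)

lemma mmul_scalar_blocks_one:
  assumes "is_mat (2*n) Y"
  shows "mmul (2*n) (scalar_blocks n 1 0 0 1) Y = Y" "mmul (2*n) Y (scalar_blocks n 1 0 0 1) = Y"
proof -
  have left: "mmul (2*n) (scalar_blocks n 1 0 0 1) Z = Z" if "is_mat (2*n) Z" for Z
    by (rule cmat_eq_blockwise[OF is_mat_closed(6)[OF is_mat_scalar_blocks that] that])
      (simp_all add: mmul_scalar_blocks_rows)
  then show "mmul (2*n) (scalar_blocks n 1 0 0 1) Y = Y" using assms .
  have "mmul (2*n) Y (scalar_blocks n 1 0 0 1) = mtrans (mmul (2*n) (scalar_blocks n 1 0 0 1) (mtrans Y))"
    by (simp add: mtrans_mmul mtrans_scalar_blocks)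
  then show "mmul (2*n) Y (scalar_blocks n 1 0 0 1) = Y"
    by (simp add: left assms is_mat_closed(5))
qed

(* For P = [[I, I], [i I, -i I]] one has P^T P = 2 J with J = form_mat n 1, so conjugation by P
   carries the J-orthogonal Lie algebra onto the skew-symmetric matrices. *)

definition so_conj :: "nat \<Rightarrow> cmat" where "so_conj n = scalar_blocks n 1 1 \<i> (-\<i>)"
definition so_conj_inv :: "nat \<Rightarrow> cmat" where
  "so_conj_inv n = scalar_blocks n (1/2) (-\<i>/2) (1/2) (\<i>/2)"

definition to_so :: "nat \<Rightarrow> cmat \<Rightarrow> cmat" where
  "to_so n X = mmul (2*n) (so_conj n) (mmul (2*n) X (so_conj_inv n))"
definition from_so :: "nat \<Rightarrow> cmat \<Rightarrow> cmat" where
  "from_so n Y = mmul (2*n) (so_conj_inv n) (mmul (2*n) Y (so_conj n))"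

lemma form_mat_one: "form_mat n 1 = scalar_blocks n 0 1 1 0"
  by (rule cmat_eq_blockwise[OF _ is_mat_scalar_blocks])
    (auto simp: is_mat_def form_mat_def scalar_blocks_entries)

lemma so_conj_identities:
  "mmul (2*n) (so_conj n) (so_conj_inv n) = scalar_blocks n 1 0 0 1"
  "mmul (2*n) (so_conj_inv n) (so_conj n) = scalar_blocks n 1 0 0 1"
  "mmul (2*n) (mtrans (so_conj_inv n)) (form_mat n 1) = msmult (1/2) (so_conj n)"
  "mmul (2*n) (form_mat n 1) (so_conj_inv n) = msmult (1/2) (mtrans (so_conj n))"
  "mmul (2*n) (form_mat n 1) (mtrans (so_conj n)) = msmult 2 (so_conj_inv n)"
  "mmul (2*n) (form_mat n 1) (form_mat n 1) = scalar_blocks n 1 0 0 1"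
  unfolding so_conj_def so_conj_inv_def form_mat_one mtrans_scalar_blocks msmult_scalar_blocks
    mmul_scalar_blocks
  by (simp_all add: field_simps)

lemma is_mat_so_conj: "is_mat (2*n) (so_conj n)" "is_mat (2*n) (so_conj_inv n)"
  by (simp_all add: so_conj_def so_conj_inv_def is_mat_scalar_blocks)

lemma to_so_from_so:
  assumes "is_mat (2*n) X"
  shows "from_so n (to_so n X) = X" "to_so n (from_so n X) = X"
  using assms
  by (simp_all add: to_so_def from_so_def mmul_scalar_blocks_one is_mat_closed is_mat_so_conj
      so_conj_identities flip: mmul_assoc)
    (simp_all add: mmul_assoc so_conj_identities mmul_scalar_blocks_one is_mat_closed is_mat_so_conj)

lemma to_so_linear:
  "to_so n (madd X Y) = madd (to_so n X) (to_so n Y)"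
  "to_so n (msub X Y) = msub (to_so n X) (to_so n Y)"
  "to_so n (msmult c X) = msmult c (to_so n X)"
  by (simp_all add: to_so_def mmul_linear)

lemma to_so_mmul:
  assumes "is_mat (2*n) Y"
  shows "to_so n (mmul (2*n) X Y) = mmul (2*n) (to_so n X) (to_so n Y)"
proof -
  have "mmul (2*n) (so_conj_inv n) (mmul (2*n) (so_conj n) (mmul (2*n) Y (so_conj_inv n))) =
      mmul (2*n) Y (so_conj_inv n)"
    using assms by (simp add: so_conj_identities mmul_scalar_blocks_one is_mat_closed is_mat_so_conj
        flip: mmul_assoc)
  then show ?thesis by (simp add: to_so_def mmul_assoc)
qed

lemma to_so_mem:
  assumes X: "X \<in> form_alg n 1"
  shows "to_so n X \<in> so_set (2*n)"
proof -
  let ?J = "form_mat n 1" and ?P = "so_conj n" and ?Q = "so_conj_inv n"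
  have m: "is_mat (2*n) X" using X by (simp add: form_alg_def)
  have XJ: "mmul (2*n) (mtrans X) ?J = msmult (-1) (mmul (2*n) ?J X)"
    using X by (simp add: form_alg_def form_defect_def madd_eq_mzero_imp)
  have Xt: "mtrans X = msmult (-1) (mmul (2*n) (mmul (2*n) ?J X) ?J)"
  proof -
    have "mtrans X = mmul (2*n) (mmul (2*n) (mtrans X) ?J) ?J"
      using m by (simp add: mmul_assoc so_conj_identities mmul_scalar_blocks_one is_mat_closed)
    then show ?thesis by (simp add: XJ mmul_linear)
  qed
  have "mtrans (to_so n X) = mmul (2*n) (mmul (2*n) (mtrans ?Q) (mtrans X)) (mtrans ?P)"
    by (simp add: to_so_def mtrans_mmul)
  also have "\<dots> = msmult (-1) (mmul (2*n) (mmul (2*n) (mtrans ?Q) ?J)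
      (mmul (2*n) X (mmul (2*n) ?J (mtrans ?P))))"
    by (simp add: Xt mmul_linear mmul_assoc)
  also have "\<dots> = msmult (-1) (to_so n X)"
    by (simp add: so_conj_identities mmul_linear msmult_linear to_so_def mmul_assoc)
  finally show ?thesis using m by (simp add: so_set_def to_so_def is_mat_closed is_mat_so_conj)
qed

lemma from_so_mem:
  assumes Y: "Y \<in> so_set (2*n)"
  shows "from_so n Y \<in> form_alg n 1"
proof -
  let ?J = "form_mat n 1" and ?P = "so_conj n" and ?Q = "so_conj_inv n"
  have m: "is_mat (2*n) Y" and t: "mtrans Y = msmult (-1) Y" using Y by (auto simp: so_set_def)
  have "mmul (2*n) (mtrans (from_so n Y)) ?J =
      mmul (2*n) (mmul (2*n) (mtrans ?P) (mtrans Y)) (mmul (2*n) (mtrans ?Q) ?J)"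
    by (simp add: from_so_def mtrans_mmul mmul_assoc)
  also have "\<dots> = msmult (-1/2) (mmul (2*n) (mtrans ?P) (mmul (2*n) Y ?P))"
    by (simp add: t so_conj_identities mmul_linear msmult_linear mmul_assoc)
  finally have "mmul (2*n) (mtrans (from_so n Y)) ?J = msmult (-1/2) (mmul (2*n) (mtrans ?P) (mmul (2*n) Y ?P))" .
  moreover have "mmul (2*n) ?J (from_so n Y) = msmult (1/2) (mmul (2*n) (mtrans ?P) (mmul (2*n) Y ?P))"
    by (simp add: from_so_def so_conj_identities mmul_linear flip: mmul_assoc)
  ultimately have "form_defect n 1 (from_so n Y) = mzero"
    by (simp add: form_defect_def cmat_defs fun_eq_iff)
  then show ?thesis using m by (simp add: form_alg_def from_so_def is_mat_closed is_mat_so_conj)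
qed

lemma form_alg_one_iso_so: "lie_iso (2*n) (form_alg n 1) (2*n) (so_set (2*n))"
proof -
  have mat: "is_mat (2*n) X" if "X \<in> form_alg n 1" for X
    using that by (simp add: form_alg_def)
  have so_mat: "is_mat (2*n) Y" if "Y \<in> so_set (2*n)" for Y
    using that by (simp add: so_set_def)
  have "bij_betw (to_so n) (form_alg n 1) (so_set (2*n))"
    by (rule bij_betw_byWitness[where f' = "from_so n"])
      (auto simp: to_so_from_so mat so_mat to_so_mem from_so_mem)
  moreover have "to_so n (bracket (2*n) X Y) = bracket (2*n) (to_so n X) (to_so n Y)"
    if "X \<in> form_alg n 1" "Y \<in> form_alg n 1" for X Y
    using mat[OF that(1)] mat[OF that(2)] by (simp add: bracket_def to_so_linear to_so_mmul)
  ultimately show ?thesis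
    unfolding lie_iso_def by (intro exI[of _ "to_so n"]) (simp add: to_so_linear mat)
qed

section \<open>The image of psi_a\<close>

lemma psi_image_closed:
  "mzero \<in> psi_image n a"
  "X \<in> psi_image n a \<Longrightarrow> Y \<in> psi_image n a \<Longrightarrow> bracket (2*n) X Y \<in> psi_image n a"
  "X \<in> psi_image n a \<Longrightarrow> Y \<in> psi_image n a \<Longrightarrow> madd X Y \<in> psi_image n a"
  "X \<in> psi_image n a \<Longrightarrow> Y \<in> psi_image n a \<Longrightarrow> msub X Y \<in> psi_image n a"
  "X \<in> psi_image n a \<Longrightarrow> msmult c X \<in> psi_image n a"
  unfolding psi_image_def by (auto intro: lie_gen.intros lie_gen_msub)

lemma psi_image_cancel:
  "madd X Y \<in> psi_image n a \<Longrightarrow> X \<in> psi_image n a \<Longrightarrow> Y \<in> psi_image n a"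
  "madd X Y \<in> psi_image n a \<Longrightarrow> Y \<in> psi_image n a \<Longrightarrow> X \<in> psi_image n a"
  "msmult c X \<in> psi_image n a \<Longrightarrow> c \<noteq> 0 \<Longrightarrow> X \<in> psi_image n a"
  unfolding psi_image_def by (auto intro: lie_gen_madd_cancel lie_gen_msmult_cancel)

lemma psi_gens_in_image:
  assumes "i \<in> {1..n}"
  shows "psiE n a i \<in> psi_image n a" "psiF n a i \<in> psi_image n a" "psiH n a i \<in> psi_image n a"
  unfolding psi_image_def by (rule lie_gen.gen, use assms in blast)+

lemma psiE_psiF_eq_dmat:
  "i < n \<Longrightarrow> psiE n a i = dmat n i (i+1)" "i < n \<Longrightarrow> psiF n a i = dmat n (i+1) i"
  by (simp_all add: psiE_def psiF_def dmat_def add.commute add.left_commute)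

lemma psiE_psiF_last: "psiE n a n = umat n (inverse a) n 1" "psiF n a n = lmat n a 1 n"
  by (simp_all add: psiE_def psiF_def umat_def lmat_def mult_2)

lemma dmat_in_psi_image:
  assumes "p \<in> {1..n}" "q \<in> {1..n}" "p \<noteq> q"
  shows "dmat n p q \<in> psi_image n a"
proof -
  have chain: "dmat n p (p + Suc d) \<in> psi_image n a \<and> dmat n (p + Suc d) p \<in> psi_image n a"
    if "1 \<le> p" "p + Suc d \<le> n" for p d
    using that
  proof (induction d)
    case 0
    then show ?case using psi_gens_in_image(1,2)[of p n a] by (simp add: psiE_psiF_eq_dmat)
  next
    case (Suc d)
    let ?q = "p + Suc d"
    have step: "dmat n ?q (?q+1) \<in> psi_image n a" "dmat n (?q+1) ?q \<in> psi_image n a"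
      using Suc.prems psi_gens_in_image(1,2)[of ?q n a] by (simp_all add: psiE_psiF_eq_dmat)
    have IH: "dmat n p ?q \<in> psi_image n a" "dmat n ?q p \<in> psi_image n a"
      using Suc by auto
    have "bracket (2*n) (dmat n p ?q) (dmat n ?q (?q+1)) = dmat n p (?q+1)"
      "bracket (2*n) (dmat n (?q+1) ?q) (dmat n ?q p) = dmat n (?q+1) p"
      using Suc.prems by (simp_all add: bracket_dmat_dmat)
    then have "dmat n p (?q+1) \<in> psi_image n a \<and> dmat n (?q+1) p \<in> psi_image n a"
      using IH step psi_image_closed(2) by metis
    then show ?case by simp
  qed
  show ?thesis
  proof (cases "p < q")
    case True
    then obtain d where "q = p + Suc d" using less_imp_Suc_add by fastforce
    then show ?thesis using chain[of p d] assms by auto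
  next
    case False
    then obtain d where "p = q + Suc d" using assms(3) less_imp_Suc_add[of q p] by fastforce
    then show ?thesis using chain[of q d] assms by auto
  qed
qed

lemma umat_in_psi_image:
  assumes "x \<in> {1..n}" "r \<in> {1..n}"
  shows "umat n (inverse a) x r \<in> psi_image n a"
proof -
  have last: "umat n (inverse a) n 1 \<in> psi_image n a"
    using psi_gens_in_image(1)[of n n a] assms by (simp add: psiE_psiF_last)
  have col1: "umat n (inverse a) y 1 \<in> psi_image n a" if "y \<in> {1..n}" for y
  proof (cases "y = n")
    case False
    then have "bracket (2*n) (dmat n y n) (umat n (inverse a) n 1) = umat n (inverse a) y 1"
      using that by (simp add: bracket_dmat_umat)
    then show ?thesis
      using psi_image_closed(2)[OF dmat_in_psi_image[of y n n a] last] False that by auto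
  qed (use last in simp)
  show ?thesis
  proof (cases "r = 1")
    case False
    have D: "dmat n r 1 \<in> psi_image n a" using dmat_in_psi_image False assms by auto
    have "bracket (2*n) (dmat n r 1) (umat n (inverse a) x 1) =
        madd (if x = 1 then umat n (inverse a) r 1 else mzero) (umat n (inverse a) x r)"
      using False assms by (simp add: bracket_dmat_umat)
    then have "madd (if x = 1 then umat n (inverse a) r 1 else mzero) (umat n (inverse a) x r)
        \<in> psi_image n a"
      using psi_image_closed(2)[OF D col1[OF assms(1)]] by simp
    moreover have "(if x = 1 then umat n (inverse a) r 1 else mzero) \<in> psi_image n a"
      using col1[OF assms(2)] psi_image_closed(1) by simp
    ultimately show ?thesis by (rule psi_image_cancel(1))
  qed (use col1 assms in simp)
qed

lemma lmat_in_psi_image: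
  assumes "y \<in> {1..n}" "p \<in> {1..n}"
  shows "lmat n a y p \<in> psi_image n a"
proof -
  have last: "lmat n a 1 n \<in> psi_image n a"
    using psi_gens_in_image(2)[of n n a] assms by (simp add: psiE_psiF_last)
  have row1: "lmat n a 1 q \<in> psi_image n a" if "q \<in> {1..n}" for q
  proof (cases "q = n")
    case False
    then have "bracket (2*n) (dmat n n q) (lmat n a 1 n) = msmult (-1) (lmat n a 1 q)"
      using that assms by (simp add: bracket_dmat_lmat)
    then have "msmult (-1) (lmat n a 1 q) \<in> psi_image n a"
      using psi_image_closed(2)[OF dmat_in_psi_image[of n n q a] last] False that by auto
    then show ?thesis by (rule psi_image_cancel(3)) simp
  qed (use last in simp)
  show ?thesis
  proof (cases "y = 1")
    case False
    have D: "dmat n 1 y \<in> psi_image n a" using dmat_in_psi_image False assms by auto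
    have "bracket (2*n) (dmat n 1 y) (lmat n a 1 p) =
        msmult (-1) (madd (lmat n a y p) (if p = 1 then lmat n a 1 y else mzero))"
      using False assms by (simp add: bracket_dmat_lmat)
    then have "madd (lmat n a y p) (if p = 1 then lmat n a 1 y else mzero) \<in> psi_image n a"
      using psi_image_closed(2)[OF D row1[OF assms(2)]] psi_image_cancel(3) by fastforce
    moreover have "(if p = 1 then lmat n a 1 y else mzero) \<in> psi_image n a"
      using row1[OF assms(1)] psi_image_closed(1) by simp
    ultimately show ?thesis by (rule psi_image_cancel(2))
  qed (use row1 assms in simp)
qed

lemma psi_image_subset_sl: "psi_image n a \<subseteq> sl_set (2*n)"
  unfolding psi_image_def
proof (rule lie_gen_minimal; (intro sl_set_subalgebra)?)
  have EF: "psiE n a i \<in> sl_set (2*n) \<and> psiF n a i \<in> sl_set (2*n)" if "i \<in> {1..n}" for i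
    using that
    by (auto simp: sl_set_def psiE_def psiF_def mtrace_linear mtrace_munit
        intro!: is_mat_closed is_mat_munit)
  then show "(\<Union>i\<in>{1..n}. {psiE n a i, psiF n a i, psiH n a i}) \<subseteq> sl_set (2*n)"
    by (auto simp: psiH_def intro: sl_set_subalgebra)
qed

lemma offdiag_munit_in_psi_image:
  assumes "a \<noteq> 1" "a \<noteq> -1" "x \<in> {1..n}" "r \<in> {1..n}"
  shows "munit x (n+r) \<in> psi_image n a" "munit (n+r) x \<in> psi_image n a"
proof -
  let ?b = "inverse a"
  have "a * a \<noteq> 1"
    using assms(1,2) by (metis mult_cancel_left1 square_eq_1_iff)
  then have nonzero: "1 - ?b * ?b \<noteq> 0" "1 - a * a \<noteq> 0"
    by (auto simp: field_simps)
  have "msub (umat n ?b x r) (msmult ?b (umat n ?b r x)) = msmult (1 - ?b * ?b) (munit x (n+r))"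
    "msub (lmat n a r x) (msmult a (lmat n a x r)) = msmult (1 - a * a) (munit (n+r) x)"
    by (auto simp: umat_def lmat_def cmat_defs fun_eq_iff algebra_simps)
  moreover have "msub (umat n ?b x r) (msmult ?b (umat n ?b r x)) \<in> psi_image n a"
    "msub (lmat n a r x) (msmult a (lmat n a x r)) \<in> psi_image n a"
    using assms(3,4) by (auto intro!: psi_image_closed umat_in_psi_image lmat_in_psi_image)
  ultimately show "munit x (n+r) \<in> psi_image n a" "munit (n+r) x \<in> psi_image n a"
    using nonzero psi_image_cancel(3) by metis+
qed

lemma munit_in_psi_image:
  assumes "a \<noteq> 1" "a \<noteq> -1" "p \<in> {1..2*n}" "q \<in> {1..2*n}" "p \<noteq> q"
  shows "munit p q \<in> psi_image n a"
proof -
  note upper = offdiag_munit_in_psi_image(1)[OF assms(1,2)]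
    and lower = offdiag_munit_in_psi_image(2)[OF assms(1,2)]
  have "n \<ge> 1" using assms(3) by simp
  consider (UL) x y where "x \<in> {1..n}" "y \<in> {1..n}" "p = x" "q = y"
    | (UR) x r where "x \<in> {1..n}" "r \<in> {1..n}" "p = x" "q = n + r"
    | (LL) r x where "x \<in> {1..n}" "r \<in> {1..n}" "p = n + r" "q = x"
    | (LR) r s where "r \<in> {1..n}" "s \<in> {1..n}" "p = n + r" "q = n + s"
    using assms(3,4) by (elim double_range_cases) auto
  then show ?thesis
  proof cases
    case UL
    then have "munit p q = bracket (2*n) (munit p (n+1)) (munit (n+1) q)"
      using assms(5) by (simp add: bracket_munit_munit)
    moreover have "munit p (n+1) \<in> psi_image n a" "munit (n+1) q \<in> psi_image n a"
      using UL upper[of p n 1] lower[of q n 1] \<open>n \<ge> 1\<close> by auto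
    ultimately show ?thesis by (simp add: psi_image_closed)
  next
    case LR
    then have "munit p q = bracket (2*n) (munit p 1) (munit 1 q)"
      using assms(5) \<open>n \<ge> 1\<close> by (simp add: bracket_munit_munit)
    moreover have "munit p 1 \<in> psi_image n a" "munit 1 q \<in> psi_image n a"
      using LR upper lower \<open>n \<ge> 1\<close> by auto
    ultimately show ?thesis by (simp add: psi_image_closed)
  qed (use upper lower in auto)
qed

lemma psi_image_eq_sl:
  assumes "a \<noteq> 1" "a \<noteq> -1" "n \<ge> 1"
  shows "psi_image n a = sl_set (2*n)"
proof
  show "sl_set (2*n) \<subseteq> psi_image n a"
    unfolding psi_image_def
    by (rule sl_subset_lie_gen) (use assms munit_in_psi_image in \<open>auto simp: psi_image_def\<close>)
qed (rule psi_image_subset_sl)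

lemma dmat_diag_in_psi_image:
  assumes "a \<noteq> 0" "2 \<le> n" "p \<in> {1..n}"
  shows "dmat n p p \<in> psi_image n a"
proof -
  have diff: "msub (dmat n x x) (dmat n y y) \<in> psi_image n a" if "x \<in> {1..n}" "y \<in> {1..n}" "x \<noteq> y" for x y
    using bracket_dmat_dmat_diag[OF that(3,1,2)] that
      psi_image_closed(2)[OF dmat_in_psi_image dmat_in_psi_image] by metis
  have "psiH n a n = madd (dmat n 1 1) (dmat n n n)"
    using assms(1,2) by (simp add: psiH_def psiE_def psiF_def bracket_def mmul_simps dmat_def)
      (auto simp: fun_eq_iff cmat_defs)
  then have "madd (madd (dmat n 1 1) (dmat n n n)) (msub (dmat n 1 1) (dmat n n n)) \<in> psi_image n a"
    using psi_gens_in_image(3)[of n n a] diff[of 1 n] assms(2) by (auto intro: psi_image_closed)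
  moreover have "madd (madd (dmat n 1 1) (dmat n n n)) (msub (dmat n 1 1) (dmat n n n)) =
      msmult 2 (dmat n 1 1)"
    by (simp add: cmat_defs fun_eq_iff)
  ultimately have first: "dmat n 1 1 \<in> psi_image n a" using psi_image_cancel(3) by fastforce
  show ?thesis
  proof (cases "p = 1")
    case False
    have "msub (dmat n 1 1) (msub (dmat n 1 1) (dmat n p p)) = dmat n p p"
      by (simp add: cmat_defs fun_eq_iff)
    then show ?thesis
      using psi_image_closed(4)[OF first diff[of 1 p]] False assms(3) by simp
  qed (use first in simp)
qed

lemma psi_image_eq_form_alg:
  assumes "a = 1 \<or> a = -1" "2 \<le> n"
  shows "psi_image n a = form_alg n (-a)"
proof
  have a: "inverse a = a" "- (- a) = a" "(- a) * (- a) = 1" "a \<noteq> 0" using assms(1) by auto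
  show "psi_image n a \<subseteq> form_alg n (-a)"
    unfolding psi_image_def
  proof (rule lie_gen_minimal; (intro form_alg_linear_closed form_alg_bracket)?)
    have "psiE n a i \<in> form_alg n (-a) \<and> psiF n a i \<in> form_alg n (-a)" if "i \<in> {1..n}" for i
    proof (cases "i < n")
      case True
      then show ?thesis using that by (simp add: psiE_psiF_eq_dmat dmat_in_form_alg)
    next
      case False
      then have "i = n" using that by simp
      then show ?thesis
        using that umat_in_form_alg[of n n 1 "-a"] lmat_in_form_alg[of 1 n n "-a"] a
        by (simp add: psiE_psiF_last)
    qed
    then show "(\<Union>i\<in>{1..n}. {psiE n a i, psiF n a i, psiH n a i}) \<subseteq> form_alg n (-a)"
      by (auto simp: psiH_def intro: form_alg_bracket)
  qed
  show "form_alg n (-a) \<subseteq> psi_image n a"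
    unfolding psi_image_def
  proof (rule form_alg_subset_lie_gen)
    fix p q assume "p \<in> {1..n}" "q \<in> {1..n}"
    then show "dmat n p q \<in> lie_gen (2*n) (\<Union>i\<in>{1..n}. {psiE n a i, psiF n a i, psiH n a i}) \<and>
        umat n (- (- a)) p q \<in> lie_gen (2*n) (\<Union>i\<in>{1..n}. {psiE n a i, psiF n a i, psiH n a i}) \<and>
        lmat n (- (- a)) p q \<in> lie_gen (2*n) (\<Union>i\<in>{1..n}. {psiE n a i, psiF n a i, psiH n a i})"
      using dmat_in_psi_image dmat_diag_in_psi_image[OF a(4) assms(2)] umat_in_psi_image[of p n q a]
        lmat_in_psi_image[of p n q a] a
      unfolding psi_image_def by (cases "p = q") auto
  qed (use a in simp)
qed

section \<open>The defining relations of gim(M_n)\<close>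

definition hweight :: "nat \<Rightarrow> nat \<Rightarrow> nat \<Rightarrow> complex" where
  "hweight n i p = (if i < n then (if p = i then 1 else 0) - (if p = i+1 then 1 else 0)
                   - (if p = n+i then 1 else 0) + (if p = n+i+1 then 1 else 0)
               else (if p = 1 then 1 else 0) + (if p = n then 1 else 0)
                   - (if p = n+1 then 1 else 0) - (if p = n+n then 1 else 0))"

context
  fixes n :: nat and a :: complex
  assumes n3: "n \<ge> 3" and a0: "a \<noteq> 0"
begin

lemma psiH_eq_diag_mat:
  assumes "i \<in> {1..n}"
  shows "psiH n a i = diag_mat (2*n) (hweight n i)"
proof (cases "i < n")
  case True
  then show ?thesis using assms
    by (simp add: psiH_def psiE_def psiF_def bracket_def mmul_simps)
      (auto simp: fun_eq_iff cmat_defs diag_mat_def hweight_def)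
next
  case False
  then have "i = n" using assms by simp
  then show ?thesis using n3 a0
    by (simp add: psiH_def psiE_def psiF_def bracket_def mmul_simps)
      (auto simp: fun_eq_iff cmat_defs diag_mat_def hweight_def)
qed

lemma hweight_differences:
  assumes "i \<in> {1..n}" "j \<in> {1..n}" "j < n"
  shows "hweight n i j - hweight n i (j+1) = of_int (Mn n i j)"
    "hweight n i (n+j+1) - hweight n i (n+j) = of_int (Mn n i j)"
  using assms n3 by (auto simp: hweight_def Mn_def)

lemma hweight_differences_last:
  assumes "i \<in> {1..n}"
  shows "hweight n i n - hweight n i (n+1) = of_int (Mn n i n)"
    "hweight n i 1 - hweight n i (n+n) = of_int (Mn n i n)"
  using assms n3 by (auto simp: hweight_def Mn_def)

lemma bracket_psiH_psiE:
  assumes "i \<in> {1..n}" "j \<in> {1..n}"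
  shows "bracket (2*n) (psiH n a i) (psiE n a j) = msmult (of_int (Mn n i j)) (psiE n a j)"
proof (cases "j < n")
  case True
  have "bracket (2*n) (psiH n a i) (psiE n a j) =
     msub (msmult (hweight n i j - hweight n i (j+1)) (munit j (j+1)))
          (msmult (hweight n i (n+j+1) - hweight n i (n+j)) (munit (n+j+1) (n+j)))"
    using assms True
    by (simp add: psiH_eq_diag_mat psiE_def bracket_bilinear bracket_diag_mat_munit)
  then show ?thesis
    using hweight_differences[OF assms True] True by (simp add: psiE_def msmult_linear)
next
  case False
  then have j: "j = n" using assms by simp
  have "bracket (2*n) (psiH n a i) (psiE n a j) =
     madd (msmult (hweight n i n - hweight n i (n+1)) (munit n (n+1)))
          (msmult (inverse a) (msmult (hweight n i 1 - hweight n i (n+n)) (munit 1 (2*n))))"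
    using assms n3 unfolding j
    by (simp add: psiH_eq_diag_mat psiE_def bracket_bilinear bracket_diag_mat_munit mult_2)
  then show ?thesis
    using hweight_differences_last[OF assms(1)] j by (simp add: psiE_def msmult_linear mult.commute)
qed

lemma bracket_psiH_psiF:
  assumes "i \<in> {1..n}" "j \<in> {1..n}"
  shows "bracket (2*n) (psiH n a i) (psiF n a j) = msmult (- of_int (Mn n i j)) (psiF n a j)"
proof (cases "j < n")
  case True
  have "bracket (2*n) (psiH n a i) (psiF n a j) =
     msub (msmult (- (hweight n i j - hweight n i (j+1))) (munit (j+1) j))
          (msmult (- (hweight n i (n+j+1) - hweight n i (n+j))) (munit (n+j) (n+j+1)))"
    using assms True
    by (simp add: psiH_eq_diag_mat psiF_def bracket_bilinear bracket_diag_mat_munit)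
  then show ?thesis
    using hweight_differences[OF assms True, THEN arg_cong[where f = uminus]] True
    by (simp add: psiF_def msmult_linear)
next
  case False
  then have j: "j = n" using assms by simp
  have "bracket (2*n) (psiH n a i) (psiF n a j) =
     madd (msmult (- (hweight n i n - hweight n i (n+1))) (munit (n+1) n))
          (msmult a (msmult (- (hweight n i 1 - hweight n i (n+n))) (munit (2*n) 1)))"
    using assms n3 unfolding j
    by (simp add: psiH_eq_diag_mat psiF_def bracket_bilinear bracket_diag_mat_munit mult_2)
  then show ?thesis
    using hweight_differences_last[OF assms(1), THEN arg_cong[where f = uminus]] j
    by (simp add: psiF_def msmult_linear mult.commute)
qed

lemmas psi_unfold = psiE_def psiF_def bracket_def mmul_simps if_distrib[where f = "mmul N A" for N A]
  if_distrib[where f = "\<lambda>B. mmul N B C" for N C]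

lemma psi_commute_lt:
  assumes "1 \<le> i" "i < n" "1 \<le> j" "j < n" "i \<noteq> j"
  shows "bracket (2*n) (psiE n a i) (psiF n a j) = mzero"
    "bracket (2*n) (psiF n a i) (psiE n a j) = mzero"
    "i + 1 \<noteq> j \<Longrightarrow> j + 1 \<noteq> i \<Longrightarrow> bracket (2*n) (psiE n a i) (psiE n a j) = mzero"
    "i + 1 \<noteq> j \<Longrightarrow> j + 1 \<noteq> i \<Longrightarrow> bracket (2*n) (psiF n a i) (psiF n a j) = mzero"
  using assms by (simp_all add: psi_unfold; auto simp: fun_eq_iff cmat_defs)+

lemma psi_commute_last:
  assumes "1 < i" "i < n"
  shows "bracket (2*n) (psiE n a i) (psiF n a n) = mzero"
    "bracket (2*n) (psiF n a i) (psiE n a n) = mzero"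
    "bracket (2*n) (psiE n a n) (psiF n a i) = mzero"
    "bracket (2*n) (psiF n a n) (psiE n a i) = mzero"
    "i + 1 < n \<Longrightarrow> bracket (2*n) (psiE n a i) (psiE n a n) = mzero"
    "i + 1 < n \<Longrightarrow> bracket (2*n) (psiF n a i) (psiF n a n) = mzero"
    "i + 1 < n \<Longrightarrow> bracket (2*n) (psiE n a n) (psiE n a i) = mzero"
    "i + 1 < n \<Longrightarrow> bracket (2*n) (psiF n a n) (psiF n a i) = mzero"
  using assms n3 by (simp_all add: psi_unfold; auto simp: fun_eq_iff cmat_defs)+

lemma psi_serre_lt:
  assumes "1 \<le> i" "i + 1 < n"
  shows "bracket (2*n) (psiE n a i) (bracket (2*n) (psiE n a i) (psiE n a (i+1))) = mzero"
    "bracket (2*n) (psiF n a i) (bracket (2*n) (psiF n a i) (psiF n a (i+1))) = mzero"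
    "bracket (2*n) (psiE n a (i+1)) (bracket (2*n) (psiE n a (i+1)) (psiE n a i)) = mzero"
    "bracket (2*n) (psiF n a (i+1)) (bracket (2*n) (psiF n a (i+1)) (psiF n a i)) = mzero"
  using assms by (simp_all add: psi_unfold; auto simp: fun_eq_iff cmat_defs)+

lemma psi_serre_last:
  assumes "i + 1 = n"
  shows "bracket (2*n) (psiE n a i) (bracket (2*n) (psiE n a i) (psiE n a n)) = mzero"
    "bracket (2*n) (psiF n a i) (bracket (2*n) (psiF n a i) (psiF n a n)) = mzero"
    "bracket (2*n) (psiE n a n) (bracket (2*n) (psiE n a n) (psiE n a i)) = mzero"
    "bracket (2*n) (psiF n a n) (bracket (2*n) (psiF n a n) (psiF n a i)) = mzero"
  using assms n3 by (simp_all add: psi_unfold; auto simp: fun_eq_iff cmat_defs)+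

lemma psi_relations_first_last:
  "bracket (2*n) (psiE n a 1) (psiE n a n) = mzero"
  "bracket (2*n) (psiF n a 1) (psiF n a n) = mzero"
  "bracket (2*n) (psiE n a n) (psiE n a 1) = mzero"
  "bracket (2*n) (psiF n a n) (psiF n a 1) = mzero"
  "bracket (2*n) (psiE n a 1) (bracket (2*n) (psiE n a 1) (psiF n a n)) = mzero"
  "bracket (2*n) (psiF n a 1) (bracket (2*n) (psiF n a 1) (psiE n a n)) = mzero"
  "bracket (2*n) (psiE n a n) (bracket (2*n) (psiE n a n) (psiF n a 1)) = mzero"
  "bracket (2*n) (psiF n a n) (bracket (2*n) (psiF n a n) (psiE n a 1)) = mzero"
  using n3 by (simp_all add: psi_unfold; auto simp: fun_eq_iff cmat_defs)+

lemma Mn_cases: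
  assumes "i \<in> {1..n}" "j \<in> {1..n}" "i \<noteq> j"
  shows "j = i + 1 \<or> i = j + 1 \<Longrightarrow> Mn n i j = -1"
    "(i = 1 \<and> j = n) \<or> (i = n \<and> j = 1) \<Longrightarrow> Mn n i j = 1"
    "\<not> (j = i + 1 \<or> i = j + 1) \<Longrightarrow> \<not> ((i = 1 \<and> j = n) \<or> (i = n \<and> j = 1)) \<Longrightarrow> Mn n i j = 0"
  using assms n3 by (auto simp: Mn_def)

lemma psi_ef_commute:
  assumes "i \<in> {1..n}" "j \<in> {1..n}" "i \<noteq> j" "Mn n i j \<le> 0"
  shows "bracket (2*n) (psiE n a i) (psiF n a j) = mzero \<and> bracket (2*n) (psiF n a i) (psiE n a j) = mzero"
proof -
  have "\<not> ((i = 1 \<and> j = n) \<or> (i = n \<and> j = 1))" using assms n3 by (auto simp: Mn_def)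
  then consider "i < n" "j < n" | "1 < i" "i < n" "j = n" | "i = n" "1 < j" "j < n"
    using assms by force
  then show ?thesis
  proof cases
    case 1
    then show ?thesis using psi_commute_lt(1,2)[of i j] assms by simp
  next
    case 2
    then show ?thesis using psi_commute_last(1,2)[of i] by simp
  next
    case 3
    then show ?thesis using psi_commute_last(3,4)[of j] by simp
  qed
qed

lemma psi_serre_adjacent:
  assumes "i \<in> {1..n}" "j \<in> {1..n}" "j = i + 1 \<or> i = j + 1"
  shows "bracket (2*n) (psiE n a i) (bracket (2*n) (psiE n a i) (psiE n a j)) = mzero \<and>
    bracket (2*n) (psiF n a i) (bracket (2*n) (psiF n a i) (psiF n a j)) = mzero"
proof -
  consider "j = i + 1" "j < n" | "j = i + 1" "j = n" | "i = j + 1" "i < n" | "i = j + 1" "i = n"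
    using assms by force
  then show ?thesis
  proof cases
    case 1
    then show ?thesis using psi_serre_lt(1,2)[of i] assms by simp
  next
    case 2
    then show ?thesis using psi_serre_last(1,2)[of i] by simp
  next
    case 3
    then show ?thesis using psi_serre_lt(3,4)[of j] assms by simp
  next
    case 4
    then show ?thesis using psi_serre_last(3,4)[of j] by simp
  qed
qed

lemma psi_commute_distant:
  assumes "i \<in> {1..n}" "j \<in> {1..n}" "i \<noteq> j" "\<not> (j = i + 1 \<or> i = j + 1)"
    and "\<not> ((i = 1 \<and> j = n) \<or> (i = n \<and> j = 1))"
  shows "bracket (2*n) (psiE n a i) (psiE n a j) = mzero \<and> bracket (2*n) (psiF n a i) (psiF n a j) = mzero"
proof -
  consider "i < n" "j < n" | "1 < i" "i + 1 < n" "j = n" | "i = n" "1 < j" "j + 1 < n"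
    using assms by force
  then show ?thesis
  proof cases
    case 1
    then show ?thesis using psi_commute_lt(3,4)[of i j] assms by simp
  next
    case 2
    then show ?thesis using psi_commute_last(5,6)[of i] by simp
  next
    case 3
    then show ?thesis using psi_commute_last(7,8)[of j] by simp
  qed
qed

lemma psi_serre:
  assumes "i \<in> {1..n}" "j \<in> {1..n}" "i \<noteq> j" "Mn n i j \<le> 0"
  shows "(bracket (2*n) (psiE n a i) ^^ nat (1 - Mn n i j)) (psiE n a j) = mzero \<and>
         (bracket (2*n) (psiF n a i) ^^ nat (1 - Mn n i j)) (psiF n a j) = mzero"
proof (cases "j = i + 1 \<or> i = j + 1")
  case adjacent: True
  then show ?thesis
    using psi_serre_adjacent[OF assms(1,2) adjacent] Mn_cases(1)[OF assms(1-3) adjacent]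
    by (simp add: numeral_2_eq_2)
next
  case distant: False
  have not_ends: "\<not> ((i = 1 \<and> j = n) \<or> (i = n \<and> j = 1))" using assms n3 by (auto simp: Mn_def)
  then show ?thesis
    using psi_commute_distant[OF assms(1-3) distant not_ends] Mn_cases(3)[OF assms(1-3) distant not_ends]
    by simp
qed

lemma psi_positive_relations:
  assumes "i \<in> {1..n}" "j \<in> {1..n}" "i \<noteq> j" "Mn n i j > 0"
  shows "bracket (2*n) (psiE n a i) (psiE n a j) = mzero \<and> bracket (2*n) (psiF n a i) (psiF n a j) = mzero \<and>
       (bracket (2*n) (psiE n a i) ^^ nat (Mn n i j + 1)) (psiF n a j) = mzero \<and>
       (bracket (2*n) (psiF n a i) ^^ nat (Mn n i j + 1)) (psiE n a j) = mzero"
proof -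
  have ends: "(i = 1 \<and> j = n) \<or> (i = n \<and> j = 1)"
    using assms n3 by (auto simp: Mn_def split: if_splits)
  then show ?thesis
    using Mn_cases(2)[OF assms(1-3) ends] psi_relations_first_last by (auto simp: numeral_2_eq_2)
qed

lemma psi_gim_relations: "gim_relations n (2*n) (psiE n a) (psiF n a) (psiH n a)"
  unfolding gim_relations_def
  using bracket_psiH_psiE bracket_psiH_psiF psi_ef_commute psi_serre psi_positive_relations
  by (auto simp: psiH_def)

end

lemma lie_iso_refl: "lie_iso N A N A"
  unfolding lie_iso_def by (intro exI[of _ id]) simp

theorem proposition4p2:
  fixes n :: nat and a :: complex
  assumes "n \<ge> 3" and "a \<noteq> 0"
  shows "gim_relations n (2*n) (psiE n a) (psiF n a) (psiH n a)
    \<and> psi_image n a \<subseteq> sl_set (2*n)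
    \<and> (a \<noteq> 1 \<and> a \<noteq> -1 \<longrightarrow> psi_image n a = sl_set (2*n))
    \<and> (a = 1 \<longrightarrow> lie_iso (2*n) (psi_image n a) (2*n) (sp_set n))
    \<and> (a = -1 \<longrightarrow> lie_iso (2*n) (psi_image n a) (2*n) (so_set (2*n)))"
proof -
  have "2 \<le> n" "1 \<le> n" using assms(1) by simp_all
  then have sp: "a = 1 \<Longrightarrow> psi_image n a = sp_set n"
    and so: "a = -1 \<Longrightarrow> psi_image n a = form_alg n 1"
    and sl: "a \<noteq> 1 \<Longrightarrow> a \<noteq> -1 \<Longrightarrow> psi_image n a = sl_set (2*n)"
    by (simp_all add: psi_image_eq_form_alg sp_set_eq_form_alg psi_image_eq_sl)
  show ?thesis
    using psi_gim_relations[OF assms] psi_image_subset_sl sp so sl lie_iso_refl form_alg_one_iso_so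
    by auto
qed

end
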